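(* Let $m\ge 1$ be an integer. For every integer $N\ge 0$ let $H_N=\det\left(\gamma^{(2m)}_{i+j+1-m}(t)\right)_{i,j=0}^{N-1}$ (with $H_0=1$). Then $$H_N=\begin{cases}\xi_1\, t^{m^2n(n-1)/2}, & \text{if } N=mn \text{ with } n\ge 0,\\ 0, & \text{otherwise},\end{cases}$$ where $\xi_1=(-1)^{nm(m-1)/2}$.
   Context: The Narayana polynomials are $\gamma_n(t)=\sum_{k=0}^{n}\binom{n}{k}\binom{n-1}{k}\frac{1}{k+1}t^k$ (so $\gamma_0(t)=1$), with generating function $\gamma(t,q)=\sum_{n\ge0}\gamma_n(t)q^n$. Let $G(t,q)=(\gamma(t,q)-1)/q$. For $m\ge1$ the polynomials $\gamma^{(2m)}_n(t)$ are defined by $\sum_{n\ge0}\gamma^{(2m)}_n(t)q^n=G(t,q)^m$, and $\gamma^{(2m)}_i(t)=0$ for $i<0$. Equivalently, $\gamma^{(2m)}_{n-m}(t)$ is the coefficient of $q^n$ in $(\gamma(t,q)-1)^m$. *)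

theory Defs
  imports "Jordan_Normal_Form.Determinant"
          "HOL-Computational_Algebra.Polynomial"
          "HOL-Computational_Algebra.Formal_Power_Series"
begin

(* Narayana polynomial gamma_n(t) = sum_{k=0}^n C(n,k) C(n-1,k)/(k+1) t^k, over Q[t].
   For n = 0, binom(n-1,0) = 1, so gamma_0 = 1 (nat subtraction gives 0 choose 0 = 1). *)
definition narayana :: "nat \<Rightarrow> rat poly" where
  "narayana n = (\<Sum>k\<le>n. monom (of_nat (n choose k) * of_nat ((n - 1) choose k) / of_nat (k + 1)) k)"

definition narayana_fps :: "rat poly fps" where
  "narayana_fps = Abs_fps narayana"

definition G_fps :: "rat poly fps" where
  "G_fps = fps_shift 1 (narayana_fps - 1)"

definition gamma2m :: "nat \<Rightarrow> int \<Rightarrow> rat poly" where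
  "gamma2m m i = (if i < 0 then 0 else fps_nth (G_fps ^ m) (nat i))"

definition hankel :: "nat \<Rightarrow> nat \<Rightarrow> rat poly" where
  "hankel m N = det (mat N N (\<lambda>(i, j). gamma2m m (int i + int j + 1 - int m)))"

end

theory Submission
  imports Defs "HOL-Computational_Algebra.Formal_Laurent_Series"
begin

text \<open>
  Fix \<open>t = x\<close>. The series \<open>V = \<gamma>(x, q) - 1\<close> is the compositional inverse of
  \<open>q / ((1 + q) (1 + x q))\<close>, i.e. \<open>V = q (1 + V) (1 + x V)\<close>, and Lagrange inversion, done with
  residues of Laurent series in \<open>q\<close>, recovers the Narayana coefficients. Hence the Hankel
  entries \<open>[q^(i + j + 1)] V^m\<close> are the moments \<open>L(q^-(i + j))\<close> of the functional
  \<open>L(f) = res (f q^-2 V^m)\<close>.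

  In the variable \<open>y = q^-1 - (1 + x) = V^-1 + x V\<close> the Dickson polynomials of both kinds become
  Laurent binomials in \<open>V\<close>, and \<open>q^-2 dq = V^-1 (V^-1 - x V) dV\<close>. Passing to these monic
  bases leaves the Hankel determinant unchanged and, since \<open>res (V^e dV)\<close> is \<open>1\<close> for
  \<open>e = -1\<close> and \<open>0\<close> otherwise, turns the Hankel matrix into a sparse matrix with entries
  \<open>0\<close>, \<open>1\<close> and \<open>\<plusminus>x^k\<close>. A unitriangular column operation clears its rows \<open>a \<ge> m\<close>; the
  remaining \<open>(m - 1) \<times> (m - 1)\<close> corner is diagonal if \<open>N / m\<close> is even and anti-diagonal if it
  is odd, and a zero column appears when \<open>m\<close> does not divide \<open>N\<close>.
\<close>

section \<open>Residues of powers of a Laurent series\<close>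

lemma fls_residue_of_nat_times:
  "fls_residue (of_nat n * f) = of_nat n * fls_residue (f :: 'a :: field fls)"
  using fls_residue_of_int_times(1)[of "int n" f] by simp

lemma fls_residue_power_deriv:
  fixes U :: "'a :: field_char_0 fls"
  shows "fls_residue (U ^ n * fls_deriv U) = 0"
proof -
  have "of_nat (Suc n) * fls_residue (U ^ n * fls_deriv U) = fls_residue (fls_deriv (U ^ Suc n))"
    by (simp only: fls_deriv_power diff_Suc_1 mult.assoc fls_residue_of_nat_times)
  also have "\<dots> = 0" by (rule fls_residue_deriv)
  finally show ?thesis by (simp del: of_nat_Suc)
qed

lemma fls_residue_inverse_power_deriv:
  fixes U :: "'a :: field_char_0 fls"
  shows "fls_residue (inverse U ^ Suc (Suc n) * fls_deriv U) = 0"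
proof -
  define W where "W = inverse U"
  have "fls_deriv (W ^ Suc n) = - (of_nat (Suc n) * (W ^ Suc (Suc n) * fls_deriv U))"
    by (simp only: fls_deriv_power diff_Suc_1 W_def fls_inverse_deriv_divring)
       (simp add: algebra_simps power2_eq_square del: of_nat_Suc)
  moreover have "fls_residue (- f) = - fls_residue f" for f :: "'a fls"
    by simp
  ultimately have "- (of_nat (Suc n) * fls_residue (W ^ Suc (Suc n) * fls_deriv U)) = 0"
    using fls_residue_deriv[of "W ^ Suc n"] by (simp only: fls_residue_of_nat_times)
  then show ?thesis unfolding W_def by (simp only: neg_equal_0_iff_equal mult_eq_0_iff of_nat_eq_0_iff nat.simps) simp
qed

lemma fls_residue_inverse_power_power_deriv:
  fixes U :: "'a :: field_char_0 fls"
  assumes "fls_subdegree U = 1"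
  shows "fls_residue (inverse U ^ p * U ^ q * fls_deriv U) = (if q + 1 = p then 1 else 0)"
proof -
  have U0: "U \<noteq> 0"
    using assms by auto
  have unit: "inverse U ^ k * U ^ k = 1" for k
    using U0 by (simp flip: power_mult_distrib)
  have cancel: "inverse U ^ (q + r) * U ^ q = inverse U ^ r" for r
  proof -
    have "inverse U ^ (q + r) * U ^ q = inverse U ^ r * (inverse U ^ q * U ^ q)"
      by (simp add: power_add mult_ac)
    then show ?thesis by (simp add: unit)
  qed
  have "p \<le> q \<or> p = q + 1 \<or> (\<exists>d. p = q + Suc (Suc d))"
    by presburger
  then consider r where "q = p + r" | "p = q + 1" | d where "p = q + Suc (Suc d)"
    using le_Suc_ex by blast
  then show ?thesis
  proof cases
    case 1
    then have "inverse U ^ p * U ^ q = U ^ r"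
      by (simp add: power_add unit flip: mult.assoc)
    then have "fls_residue (inverse U ^ p * U ^ q * fls_deriv U) = 0"
      using fls_residue_power_deriv[of U r] by simp
    then show ?thesis using 1 by simp
  next
    case 2
    then have "inverse U ^ p * U ^ q = inverse U"
      using cancel[of 1] by simp
    then have "fls_residue (inverse U ^ p * U ^ q * fls_deriv U) = 1"
      using fls_residue_deriv_times_inverse_eq_subdegree(2)[of U] assms by simp
    then show ?thesis using 2 by simp
  next
    case 3
    then have "inverse U ^ p * U ^ q = inverse U ^ Suc (Suc d)"
      using cancel[of "Suc (Suc d)"] by simp
    then have "fls_residue (inverse U ^ p * U ^ q * fls_deriv U) = 0"
      using fls_residue_inverse_power_deriv[of U d] by simp
    then show ?thesis using 3 by simp
  qed
qed

lemma fls_residue_X_inv_power_deriv: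
  fixes V :: "'a :: field_char_0 fps"
  shows "fls_residue (fls_X_inv ^ n * fls_deriv (fps_to_fls V)) = of_nat n * V $ n"
proof (cases n)
  case 0
  then show ?thesis by (simp add: fls_deriv_fps_to_fls)
next
  case (Suc k)
  have "fls_residue (fls_X_inv ^ n * fls_deriv (fps_to_fls V)) = fls_nth (fls_deriv (fps_to_fls V)) (int n - 1)"
    by (simp add: fls_X_inv_power_times_conv_shift)
  also have "\<dots> = fps_deriv V $ k"
    by (simp add: fls_deriv_fps_to_fls Suc)
  finally show ?thesis by (simp add: Suc)
qed

section \<open>The Narayana series at a point\<close>

definition narayana_series :: "rat \<Rightarrow> rat fps" where
  "narayana_series x = fps_inv (fps_X * inverse ((1 + fps_X) * (1 + fps_const x * fps_X)))"

definition narayana_fls :: "rat \<Rightarrow> rat fls" where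
  "narayana_fls x = fps_to_fls (narayana_series x)"

lemma narayana_series_nth_0 [simp]: "narayana_series x $ 0 = 0"
  by (simp add: narayana_series_def fps_inv_def)

lemma narayana_series_eq:
  "narayana_series x = fps_X * ((1 + narayana_series x) * (1 + fps_const x * narayana_series x))"
proof -
  define K :: "rat fps" where "K = (1 + fps_X) * (1 + fps_const x * fps_X)"
  define V where "V = narayana_series x"
  have K0: "K $ 0 = 1" and V0: "V $ 0 = 0"
    by (simp_all add: K_def V_def)
  have KV: "K oo V = (1 + V) * (1 + fps_const x * V)"
    by (simp add: K_def V0 fps_compose_mult_distrib fps_compose_add_distrib
        fps_const_mult_apply_left[symmetric])
  have "fps_X = (fps_X * inverse K) oo V"
    unfolding V_def narayana_series_def K_def[symmetric]
    by (rule fps_inv_right[symmetric]) (simp_all add: K0)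
  also have "\<dots> = V * inverse (K oo V)"
    by (simp add: fps_compose_mult_distrib[OF V0] fps_inverse_compose[OF V0] K0 V0)
  finally have X_eq: "fps_X = V * inverse ((1 + V) * (1 + fps_const x * V))"
    unfolding KV .
  have "((1 + V) * (1 + fps_const x * V)) $ 0 \<noteq> 0"
    by (simp add: V0)
  then have "V = V * inverse ((1 + V) * (1 + fps_const x * V)) * ((1 + V) * (1 + fps_const x * V))"
    by (simp add: mult.assoc inverse_mult_eq_1)
  then show ?thesis unfolding V_def[symmetric] by (simp flip: X_eq)
qed

lemma narayana_series_nth_1 [simp]: "narayana_series x $ 1 = 1"
  by (subst narayana_series_eq) (simp add: fps_mult_nth)

lemma fls_subdegree_narayana_fls: "fls_subdegree (narayana_fls x) = 1"
proof -
  have "subdegree (narayana_series x) = 1"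
    using narayana_series_nth_1[of x] by (intro subdegreeI) (auto simp: less_Suc_eq)
  then show ?thesis by (simp add: narayana_fls_def fls_subdegree_fls_to_fps)
qed

lemma narayana_fls_nonzero: "narayana_fls x \<noteq> 0"
  using fls_subdegree_narayana_fls[of x] by (metis fls_zero_subdegree zero_neq_one)

lemma fls_X_inv_eq_narayana_product:
  "fls_X_inv = inverse (narayana_fls x) * ((1 + narayana_fls x) * (1 + fls_const x * narayana_fls x))"
proof -
  define U where "U = narayana_fls x"
  define P where "P = (1 + U) * (1 + fls_const x * U)"
  have U_eq: "U = fls_X * P"
    unfolding U_def P_def narayana_fls_def
    by (subst narayana_series_eq) (simp add: fls_times_fps_to_fls)
  then have "P \<noteq> 0"
    using narayana_fls_nonzero[of x] unfolding U_def[symmetric] by auto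
  then have "inverse U * P = inverse fls_X"
    by (simp add: U_eq inverse_mult_distrib)
  then show ?thesis
    unfolding U_def[symmetric] P_def[symmetric] by (simp add: fls_inverse_X)
qed

lemma fls_X_inv_eq_narayana_sum:
  "fls_X_inv = inverse (narayana_fls x) + fls_const (1 + x) + fls_const x * narayana_fls x"
  using narayana_fls_nonzero[of x]
  by (subst fls_X_inv_eq_narayana_product[of x]) (simp add: field_simps fls_plus_const[symmetric])

lemma narayana_convolution:
  assumes "n \<ge> 1"
  shows "(\<Sum>i\<le>n. \<Sum>j\<le>n. if i + j + 1 = n then of_nat (n choose i) * of_nat (n choose j) * x ^ j else 0)
         = of_nat n * poly (narayana n) (x :: rat)"
proof -
  have column: "(\<Sum>i\<le>n. if i + j + 1 = n then of_nat (n choose i) * of_nat (n choose j) * x ^ j else 0)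
      = of_nat n * (of_nat (n choose j) * of_nat ((n - 1) choose j) / of_nat (j + 1) * x ^ j)"
    if "j \<le> n" for j
  proof (cases "j = n")
    case True
    then show ?thesis using assms by simp
  next
    case False
    then have "(\<Sum>i\<le>n. if i + j + 1 = n then of_nat (n choose i) * of_nat (n choose j) * x ^ j else 0)
        = (\<Sum>i\<le>n. if i = n - 1 - j then of_nat (n choose i) * of_nat (n choose j) * x ^ j else 0)"
      using that by (intro sum.cong) auto
    also have "\<dots> = of_nat (n choose (n - 1 - j)) * of_nat (n choose j) * x ^ j"
      by (subst sum.delta) auto
    also have "n choose (n - 1 - j) = n choose (j + 1)"
      using False that by (subst binomial_symmetric) (auto simp: Suc_diff_Suc)
    also have "(of_nat (n choose (j + 1)) :: rat) = of_nat n * of_nat ((n - 1) choose j) / of_nat (j + 1)"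
    proof -
      obtain n' where n': "n = Suc n'" using assms by (cases n) auto
      have "(of_nat (Suc n') :: rat) * of_nat (n' choose j) = of_nat (Suc n' choose Suc j) * of_nat (Suc j)"
        by (metis Suc_times_binomial_eq of_nat_mult)
      then show ?thesis unfolding n' by (simp add: field_simps del: of_nat_Suc)
    qed
    finally show ?thesis by simp
  qed
  have "(\<Sum>i\<le>n. \<Sum>j\<le>n. if i + j + 1 = n then of_nat (n choose i) * of_nat (n choose j) * x ^ j else 0)
      = (\<Sum>j\<le>n. of_nat n * (of_nat (n choose j) * of_nat ((n - 1) choose j) / of_nat (j + 1) * x ^ j))"
    by (subst sum.swap) (intro sum.cong refl column, simp)
  also have "\<dots> = of_nat n * poly (narayana n) x"
    by (simp add: narayana_def poly_sum poly_monom sum_distrib_left)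
  finally show ?thesis .
qed

lemma fls_X_inv_power_eq_narayana:
  "fls_X_inv ^ n = (\<Sum>i\<le>n. \<Sum>j\<le>n. fls_const (of_nat (n choose i) * of_nat (n choose j) * x ^ j)
      * (inverse (narayana_fls x) ^ n * narayana_fls x ^ (i + j)))"
proof -
  define U where "U = narayana_fls x"
  have "fls_X_inv ^ n = inverse U ^ n * (1 + U) ^ n * (1 + fls_const x * U) ^ n"
    unfolding U_def fls_X_inv_eq_narayana_product[of x] by (simp add: power_mult_distrib mult.assoc)
  also have "\<dots> = (\<Sum>i\<le>n. \<Sum>j\<le>n. inverse U ^ n * (of_nat (n choose i) * U ^ i)
      * (of_nat (n choose j) * (fls_const x * U) ^ j))"
  proof -
    have "(1 + U) ^ n = (\<Sum>i\<le>n. of_nat (n choose i) * U ^ i)"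
      using binomial_ring[of U 1 n] by (simp add: add.commute)
    moreover have "(1 + fls_const x * U) ^ n = (\<Sum>j\<le>n. of_nat (n choose j) * (fls_const x * U) ^ j)"
      using binomial_ring[of "fls_const x * U" 1 n] by (simp add: add.commute)
    ultimately show ?thesis by (simp only: sum_distrib_left sum_distrib_right) (rule sum.swap)
  qed
  also have "\<dots> = (\<Sum>i\<le>n. \<Sum>j\<le>n. fls_const (of_nat (n choose i) * of_nat (n choose j) * x ^ j)
      * (inverse U ^ n * U ^ (i + j)))"
    by (simp add: fls_of_nat power_mult_distrib power_add mult_ac flip: fls_const_power)
  finally show ?thesis unfolding U_def .
qed

lemma narayana_series_nth:
  assumes "n \<ge> 1"
  shows "narayana_series x $ n = poly (narayana n) x"
proof -
  define U where "U = narayana_fls x"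
  have "of_nat n * narayana_series x $ n = fls_residue (fls_X_inv ^ n * fls_deriv U)"
    unfolding U_def narayana_fls_def by (rule fls_residue_X_inv_power_deriv[symmetric])
  also have "\<dots> = (\<Sum>i\<le>n. \<Sum>j\<le>n. of_nat (n choose i) * of_nat (n choose j) * x ^ j
      * fls_residue (inverse U ^ n * U ^ (i + j) * fls_deriv U))"
    unfolding fls_X_inv_power_eq_narayana[of n x] U_def[symmetric]
    by (simp add: sum_distrib_right fls_nth_sum mult.assoc)
  also have "\<dots> = (\<Sum>i\<le>n. \<Sum>j\<le>n.
      if i + j + 1 = n then of_nat (n choose i) * of_nat (n choose j) * x ^ j else 0)"
    unfolding U_def fls_residue_inverse_power_power_deriv[OF fls_subdegree_narayana_fls]
    by (intro sum.cong refl) auto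
  also have "\<dots> = of_nat n * poly (narayana n) x"
    by (rule narayana_convolution[OF assms])
  finally show ?thesis using assms by simp
qed

definition eval_coeffs :: "rat \<Rightarrow> rat poly fps \<Rightarrow> rat fps" where
  "eval_coeffs x F = Abs_fps (\<lambda>n. poly (F $ n) x)"

lemma eval_coeffs_power: "eval_coeffs x (F ^ k) = eval_coeffs x F ^ k"
proof (induction k)
  case (Suc k)
  have "eval_coeffs x (F * F ^ k) = eval_coeffs x F * eval_coeffs x (F ^ k)"
    by (rule fps_ext) (simp add: eval_coeffs_def fps_mult_nth poly_sum)
  then show ?case using Suc by simp
qed (simp add: eval_coeffs_def fps_ext)

lemma eval_coeffs_G_fps: "eval_coeffs x G_fps = fps_shift 1 (narayana_series x)"
  by (rule fps_ext) (simp add: eval_coeffs_def G_fps_def narayana_fps_def narayana_series_nth)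

lemma poly_gamma2m:
  "poly (gamma2m m (int i + int j + 1 - int m)) x = (narayana_series x ^ m) $ (i + j + 1)"
proof -
  have "narayana_series x = fps_X * fps_shift 1 (narayana_series x)"
    by (rule fps_ext) (simp add: fps_X_mult_nth)
  then have V: "narayana_series x ^ m = fps_X ^ m * fps_shift 1 (narayana_series x) ^ m"
    by (metis power_mult_distrib)
  show ?thesis
  proof (cases "i + j + 1 < m")
    case True
    then show ?thesis by (simp add: gamma2m_def V fps_X_power_mult_nth)
  next
    case False
    then have index: "int i + int j + 1 - int m = int (i + j + 1 - m)"
      by simp
    have "poly (gamma2m m (int i + int j + 1 - int m)) x = eval_coeffs x (G_fps ^ m) $ (i + j + 1 - m)"
      unfolding gamma2m_def index by (simp add: eval_coeffs_def)
    then show ?thesis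
      using False by (simp add: eval_coeffs_power eval_coeffs_G_fps V fps_X_power_mult_nth)
  qed
qed

section \<open>Dickson polynomials\<close>

text \<open>Dickson polynomials \<open>D\<^sub>n(z, a)\<close> of the first kind (\<open>s = 2\<close>) and \<open>E\<^sub>n(z, a)\<close> of the
  second kind (\<open>s = 1\<close>).\<close>

fun dickson :: "'a :: comm_ring_1 \<Rightarrow> 'a \<Rightarrow> 'a \<Rightarrow> nat \<Rightarrow> 'a" where
  "dickson s a z 0 = s"
| "dickson s a z (Suc 0) = z"
| "dickson s a z (Suc (Suc n)) = z * dickson s a z (Suc n) - a * dickson s a z n"

lemma dickson_first_kind_parametrization:
  assumes "u * w = 1"
  shows "dickson 2 a (w + a * u) n = w ^ n + a ^ n * u ^ n"
proof -
  have uw: "u * (w * c) = c" for c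
    using assms by (simp flip: mult.assoc)
  show ?thesis
  proof (induction n rule: induct_nat_012)
    case (ge2 n)
    then show ?case by (simp add: algebra_simps uw)
  qed simp_all
qed

lemma dickson_second_kind_parametrization:
  assumes "u * w = 1"
  shows "(w - a * u) * dickson 1 a (w + a * u) n = w ^ Suc n - a ^ Suc n * u ^ Suc n"
proof -
  have uw: "u * (w * c) = c" for c
    using assms by (simp flip: mult.assoc)
  show ?thesis
  proof (induction n rule: induct_nat_012)
    case 1
    show ?case by (simp add: algebra_simps uw)
  next
    case (ge2 n)
    have "(w - a * u) * dickson 1 a (w + a * u) (Suc (Suc n))
        = (w + a * u) * ((w - a * u) * dickson 1 a (w + a * u) (Suc n))
          - a * ((w - a * u) * dickson 1 a (w + a * u) n)"
      by (simp add: algebra_simps)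
    then show ?case unfolding ge2 by (simp add: algebra_simps uw)
  qed simp
qed

lemma (in comm_ring_hom) hom_dickson: "hom (dickson s a z n) = dickson (hom s) (hom a) (hom z) n"
  by (induction s a z n rule: dickson.induct) (simp_all add: hom_distribs)

lemma degree_dickson_monic_linear:
  assumes "degree s = 0"
  shows "degree (dickson s [:a:] [:c, 1:] n) \<le> n"
proof (induction n rule: induct_nat_012)
  case (ge2 n)
  then show ?case
    by (auto simp: mult_pCons_left intro!: degree_diff_le degree_add_le
        order.trans[OF degree_pCons_le] order.trans[OF degree_smult_le])
qed (simp_all add: assms)

lemma coeff_dickson_monic_linear:
  assumes "degree s = 0"
  shows "coeff (dickson s [:a:] [:c, 1:] n) n = (if n = 0 then coeff s 0 else 1)"
proof (induction n rule: induct_nat_012)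
  case (ge2 n)
  have "coeff (dickson s [:a:] [:c, 1:] k) (Suc (Suc n)) = 0" if "k \<le> Suc n" for k
    using degree_dickson_monic_linear[OF assms, of a c k] that by (intro coeff_eq_0) linarith
  then show ?case using ge2 by (simp add: mult_pCons_left)
qed simp_all

section \<open>Hankel determinants under a unitriangular change of basis\<close>

lemma det_coeff_mat_unitriangular:
  assumes "\<And>i. i < N \<Longrightarrow> degree (P i) \<le> i \<and> coeff (P i) i = 1"
  shows "det (mat N N (\<lambda>(i, a). coeff (P i) a)) = 1"
proof -
  have "det (mat N N (\<lambda>(i, a). coeff (P i) a)) = prod_list (diag_mat (mat N N (\<lambda>(i, a). coeff (P i) a)))"
  proof (rule det_lower_triangular)
    fix i a
    assume "i < a" and "a < N"
    then show "mat N N (\<lambda>(i, a). coeff (P i) a) $$ (i, a) = 0"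
      using assms[of i] by (simp add: coeff_eq_0)
  qed simp
  also have "\<dots> = 1"
    unfolding prod_list_diag_prod using assms by simp
  finally show ?thesis .
qed

lemma det_hankel_unitriangular_change:
  fixes \<mu> :: "nat \<Rightarrow> 'a :: comm_ring_1"
  assumes P: "\<And>i. i < N \<Longrightarrow> degree (P i) \<le> i \<and> coeff (P i) i = 1"
    and Q: "\<And>i. i < N \<Longrightarrow> degree (Q i) \<le> i \<and> coeff (Q i) i = 1"
  shows "det (mat N N (\<lambda>(i, j). \<Sum>a<N. \<Sum>b<N. coeff (P i) a * \<mu> (a + b) * coeff (Q j) b))
    = det (mat N N (\<lambda>(i, j). \<mu> (i + j)))"
proof -
  define A where "A = mat N N (\<lambda>(i, a). coeff (P i) a)"
  define B where "B = mat N N (\<lambda>(j, b). coeff (Q j) b)"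
  define H where "H = mat N N (\<lambda>(i, j). \<mu> (i + j))"
  have carrier: "A \<in> carrier_mat N N" "B \<in> carrier_mat N N" "H \<in> carrier_mat N N"
    by (simp_all add: A_def B_def H_def)
  have "mat N N (\<lambda>(i, j). \<Sum>a<N. \<Sum>b<N. coeff (P i) a * \<mu> (a + b) * coeff (Q j) b)
      = A * H * transpose_mat B"
  proof (rule eq_matI)
    fix i j
    assume "i < dim_row (A * H * transpose_mat B)" and "j < dim_col (A * H * transpose_mat B)"
    then have "i < N" and "j < N"
      by (simp_all add: A_def B_def)
    then have "(A * H * transpose_mat B) $$ (i, j)
        = (\<Sum>b<N. (\<Sum>a<N. coeff (P i) a * \<mu> (a + b)) * coeff (Q j) b)"
      using carrier by (simp add: A_def B_def H_def scalar_prod_def lessThan_atLeast0)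
    also have "\<dots> = (\<Sum>a<N. \<Sum>b<N. coeff (P i) a * \<mu> (a + b) * coeff (Q j) b)"
      by (simp add: sum_distrib_right) (rule sum.swap)
    finally show "mat N N (\<lambda>(i, j). \<Sum>a<N. \<Sum>b<N. coeff (P i) a * \<mu> (a + b) * coeff (Q j) b) $$ (i, j)
        = (A * H * transpose_mat B) $$ (i, j)"
      using \<open>i < N\<close> \<open>j < N\<close> by simp
  qed (simp_all add: A_def B_def)
  then have "det (mat N N (\<lambda>(i, j). \<Sum>a<N. \<Sum>b<N. coeff (P i) a * \<mu> (a + b) * coeff (Q j) b))
      = det A * det H * det B"
    using carrier by (simp add: det_mult[of _ N] det_transpose)
  then show ?thesis
    using det_coeff_mat_unitriangular[OF P] det_coeff_mat_unitriangular[OF Q]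
    by (simp add: A_def B_def H_def)
qed

section \<open>A sparse determinant\<close>

lemma det_zero_column:
  assumes A: "A \<in> carrier_mat n n" and k: "k < n" and zero: "\<And>i. i < n \<Longrightarrow> A $$ (i, k) = 0"
  shows "det A = 0"
proof -
  have "transpose_mat A = mat\<^sub>r n n (\<lambda>i. if i = k then 0\<^sub>v n else col A i)"
    using A zero by (intro eq_matI) auto
  then have "det (transpose_mat A) = 0"
    using A k by (simp add: det_row_0)
  then show ?thesis using A by (simp add: det_transpose)
qed

lemma det_diagonal_mat: "det (mat n n (\<lambda>(i, j). if i = j then f i else 0)) = (\<Prod>i<n. f i)"
proof -
  have "det (mat n n (\<lambda>(i, j). if i = j then f i else 0))
      = prod_list (diag_mat (mat n n (\<lambda>(i, j). if i = j then f i else 0)))"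
    by (rule det_upper_triangular) (auto simp: upper_triangular_def)
  also have "\<dots> = (\<Prod>i<n. f i)"
    unfolding prod_list_diag_prod by (simp add: lessThan_atLeast0)
  finally show ?thesis .
qed

lemma det_antidiagonal_mat:
  "det (mat n n (\<lambda>(i, j). if i + j + 1 = n then c else 0)) = (-1) ^ (n * (n - 1) div 2) * (c :: 'a :: idom) ^ n"
proof (induction n)
  case (Suc n)
  define A where "A = mat (Suc n) (Suc n) (\<lambda>(i, j). if i + j + 1 = Suc n then c else 0)"
  have "A \<in> carrier_mat (n + 1) (n + 1)" unfolding A_def by simp
  then have "det A = (-1) ^ (n * 1) * det (mat (n + 1) (n + 1) (\<lambda>(i, j). A $$ (if i < n then i + 1 else i - n, j)))"
    by (rule det_swap_rows)
  also have "mat (n + 1) (n + 1) (\<lambda>(i, j). A $$ (if i < n then i + 1 else i - n, j))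
     = four_block_mat (mat n n (\<lambda>(i, j). if i + j + 1 = n then c else 0)) (0\<^sub>m n 1) (0\<^sub>m 1 n)
         (mat 1 1 (\<lambda>(i, j). if i = j then c else 0))"
    by (rule eq_matI) (auto simp: A_def)
  also have "det \<dots> = det (mat n n (\<lambda>(i, j). if i + j + 1 = n then c else 0)) * c"
    using det_diagonal_mat[of 1 "\<lambda>_. c"] by (subst det_four_block_mat_lower_left_zero) auto
  finally have "det A = (-1) ^ (n * 1) * (det (mat n n (\<lambda>(i, j). if i + j + 1 = n then c else 0)) * c)" .
  moreover have "Suc n * (Suc n - 1) div 2 = n + n * (n - 1) div 2"
    by (cases n) (auto simp: algebra_simps)
  ultimately show ?case
    unfolding A_def using Suc.IH by (simp add: power_add)
qed simp

text \<open>Entry \<open>(a, k)\<close> is the value of the moment functional on \<open>E\<^sub>a\<^sub>-\<^sub>1(y) D\<^sub>k(y)\<close> (with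
  \<open>D\<^sub>0\<close> replaced by \<open>1\<close>), see \<open>narayana_functional_dickson\<close>.\<close>

definition moment_entry :: "'a :: comm_ring_1 \<Rightarrow> nat \<Rightarrow> nat \<Rightarrow> nat \<Rightarrow> 'a" where
  "moment_entry x m a k = (if k = 0 then (if a = m then 1 else 0) else
     (if a + k = m then 1 else 0) + (if a = k + m then x ^ k else 0) - (if k = a + m then x ^ a else 0))"

text \<open>Multiplying the moment matrix on the right by the unitriangular matrix of clearing entries
  turns each row \<open>a \<ge> m\<close> into \<open>x ^ (a - m)\<close> times the unit row \<open>a - m\<close>.\<close>

definition clearing_entry :: "'a :: comm_ring_1 \<Rightarrow> nat \<Rightarrow> nat \<Rightarrow> nat \<Rightarrow> 'a" where
  "clearing_entry x m j k = (if j \<le> k \<and> 2 * m dvd k - j then x ^ ((k - j) div (2 * m) * m) else 0)"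

definition reduced_entry :: "'a :: comm_ring_1 \<Rightarrow> nat \<Rightarrow> nat \<Rightarrow> nat \<Rightarrow> 'a" where
  "reduced_entry x m a k = (if m \<le> a then (if k = a - m then x ^ (a - m) else 0)
     else clearing_entry x m (m - a) k - x ^ a * clearing_entry x m (a + m) k)"

lemma clearing_entry_step:
  assumes "m \<ge> 1"
  shows "clearing_entry x m j k = (if k = j then 1 else 0) + x ^ m * clearing_entry x m (j + 2 * m) k"
proof (cases "j \<le> k \<and> 2 * m dvd k - j")
  case True
  then obtain q where q: "k - j = 2 * m * q"
    by blast
  show ?thesis
  proof (cases q)
    case 0
    then show ?thesis using q True assms by (simp add: clearing_entry_def)
  next
    case (Suc q')
    then have "k - (j + 2 * m) = 2 * m * q'" and "j + 2 * m \<le> k"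
      using q True by (simp_all add: algebra_simps)
    then show ?thesis using q Suc True assms
      by (simp add: clearing_entry_def power_add algebra_simps)
  qed
next
  case False
  moreover have "\<not> (j + 2 * m \<le> k \<and> 2 * m dvd k - (j + 2 * m))"
  proof
    assume far: "j + 2 * m \<le> k \<and> 2 * m dvd k - (j + 2 * m)"
    then obtain q where "k - (j + 2 * m) = 2 * m * q"
      by blast
    then have "k - j = 2 * m * (q + 1)"
      using far by (simp add: algebra_simps)
    then show False
      using False far by auto
  qed
  ultimately show ?thesis
    by (auto simp: clearing_entry_def)
qed

lemma clearing_entry_below_period:
  assumes "j < 2 * m"
  shows "clearing_entry x m j k = (if k mod (2 * m) = j then x ^ (k div (2 * m) * m) else 0)"
proof -
  have k: "k = 2 * m * (k div (2 * m)) + k mod (2 * m)"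
    by simp
  have "(j \<le> k \<and> 2 * m dvd k - j) \<longleftrightarrow> k mod (2 * m) = j"
  proof
    assume "j \<le> k \<and> 2 * m dvd k - j"
    then obtain q where "k = j + 2 * m * q"
      by (metis dvdE le_add_diff_inverse)
    then show "k mod (2 * m) = j"
      using assms by simp
  next
    assume "k mod (2 * m) = j"
    then show "j \<le> k \<and> 2 * m dvd k - j"
      using k by (metis add_diff_cancel_right' dvd_triv_left le_add2)
  qed
  moreover have "(k - j) div (2 * m) = k div (2 * m)" if "k mod (2 * m) = j"
  proof -
    have "k - j = 2 * m * (k div (2 * m))"
      using that k by linarith
    then show ?thesis
      using assms by simp
  qed
  ultimately show ?thesis
    by (simp add: clearing_entry_def)
qed

lemma det_clearing_mat: "det (mat N N (\<lambda>(j, k). clearing_entry x m j k)) = 1"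
proof -
  have "det (mat N N (\<lambda>(j, k). clearing_entry x m j k))
      = prod_list (diag_mat (mat N N (\<lambda>(j, k). clearing_entry x m j k)))"
    by (rule det_upper_triangular) (auto simp: upper_triangular_def clearing_entry_def)
  also have "\<dots> = 1"
    unfolding prod_list_diag_prod by (simp add: clearing_entry_def)
  finally show ?thesis .
qed

lemma moment_mat_mult_clearing_mat:
  assumes m: "m \<ge> 1"
  shows "mat N N (\<lambda>(i, j). moment_entry x m (Suc i) j) * mat N N (\<lambda>(j, k). clearing_entry x m j k)
    = mat N N (\<lambda>(i, k). reduced_entry x m (Suc i) k)"
proof (rule eq_matI)
  fix i k
  assume "i < dim_row (mat N N (\<lambda>(i, k). reduced_entry x m (Suc i) k))"
    and "k < dim_col (mat N N (\<lambda>(i, k). reduced_entry x m (Suc i) k))"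
  then have i: "i < N" and k: "k < N" by auto
  define a where "a = Suc i"
  define d where "d = (if m \<le> a then a - m else m - a)"
  define e where "e = (if m \<le> a then x ^ (a - m) else 1)"
  have C0: "clearing_entry x m j k = 0" if "j \<ge> N" for j
    using that k by (simp add: clearing_entry_def)
  have row: "moment_entry x m a j = (if j = d then e else 0) - (if j = a + m then x ^ a else 0)" for j
    by (auto simp: moment_entry_def a_def d_def e_def)
  have "(mat N N (\<lambda>(i, j). moment_entry x m (Suc i) j) * mat N N (\<lambda>(j, k). clearing_entry x m j k)) $$ (i, k)
      = (\<Sum>j<N. moment_entry x m a j * clearing_entry x m j k)"
    using i k by (simp add: scalar_prod_def lessThan_atLeast0 a_def)
  also have "\<dots> = (\<Sum>j<N. (if j = d then e * clearing_entry x m j k else 0)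
      - (if j = a + m then x ^ a * clearing_entry x m j k else 0))"
    by (rule sum.cong) (simp_all add: row left_diff_distrib)
  also have "\<dots> = e * clearing_entry x m d k - x ^ a * clearing_entry x m (a + m) k"
    unfolding sum_subtractf using C0 by (simp add: sum.delta)
  also have "\<dots> = reduced_entry x m a k"
  proof (cases "m \<le> a")
    case True
    then have "x ^ a = x ^ (a - m) * x ^ m"
      by (simp flip: power_add)
    then show ?thesis
      using True clearing_entry_step[OF m, of x "a - m" k] by (simp add: d_def e_def reduced_entry_def algebra_simps)
  next
    case False
    then show ?thesis by (simp add: d_def e_def reduced_entry_def)
  qed
  finally show "(mat N N (\<lambda>(i, j). moment_entry x m (Suc i) j) * mat N N (\<lambda>(j, k). clearing_entry x m j k)) $$ (i, k)
      = mat N N (\<lambda>(i, k). reduced_entry x m (Suc i) k) $$ (i, k)"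
    using i k by (simp add: a_def)
qed auto

lemma det_moment_mat_eq_reduced:
  assumes "m \<ge> 1"
  shows "det (mat N N (\<lambda>(i, j). moment_entry x m (Suc i) j)) = det (mat N N (\<lambda>(i, k). reduced_entry x m (Suc i) k))"
proof -
  have "det (mat N N (\<lambda>(i, j). moment_entry x m (Suc i) j) * mat N N (\<lambda>(j, k). clearing_entry x m j k))
      = det (mat N N (\<lambda>(i, j). moment_entry x m (Suc i) j)) * det (mat N N (\<lambda>(j, k). clearing_entry x m j k))"
    by (rule det_mult) auto
  then show ?thesis
    by (simp add: moment_mat_mult_clearing_mat[OF assms] det_clearing_mat)
qed

lemma det_reduced_mat_not_dvd:
  assumes m: "m \<ge> 1" and not_dvd: "\<not> m dvd N"
  shows "det (mat N N (\<lambda>(i, k). reduced_entry x m (Suc i) k)) = 0"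
proof (rule det_zero_column)
  define k where "k = m * (N div m)"
  have N: "N = k + N mod m" and "0 < N mod m" "N mod m < m"
    using m not_dvd by (simp_all add: k_def mod_greater_zero_iff_not_dvd)
  then show "k < N" by linarith
  have k_mod: "k mod (2 * m) = 0 \<or> k mod (2 * m) = m"
    by (auto simp: k_def mult.commute[of 2] mod_mult_mult1 mod2_eq_if)
  fix i
  assume "i < N"
  show "mat N N (\<lambda>(i, k). reduced_entry x m (Suc i) k) $$ (i, k) = 0"
  proof (cases "m \<le> Suc i")
    case True
    then show ?thesis
      using \<open>i < N\<close> \<open>k < N\<close> N \<open>N mod m < m\<close> by (simp add: reduced_entry_def)
  next
    case False
    then have "clearing_entry x m (m - Suc i) k = 0" and "clearing_entry x m (Suc i + m) k = 0"
      using k_mod by (auto simp: clearing_entry_below_period)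
    then show ?thesis
      using False \<open>i < N\<close> \<open>k < N\<close> by (simp add: reduced_entry_def)
  qed
qed simp

lemma det_reduced_mat_block:
  fixes x :: "'a :: idom"
  assumes m: "m = Suc p"
  shows "det (mat (p + d) (p + d) (\<lambda>(i, k). reduced_entry x m (Suc i) k))
    = (-1) ^ (p * d) * det (mat p p (\<lambda>(i, j). reduced_entry x m (Suc i) (j + d))) * x ^ (d * (d - 1) div 2)"
proof -
  define A where "A = mat (p + d) (p + d) (\<lambda>(i, k). reduced_entry x m (Suc i) k)"
  have "A \<in> carrier_mat (p + d) (p + d)"
    unfolding A_def by simp
  then have "det A = (-1) ^ (p * d) * det (mat (p + d) (p + d) (\<lambda>(i, j). A $$ (i, if j < p then j + d else j - p)))"
    by (rule det_swap_cols)
  also have "mat (p + d) (p + d) (\<lambda>(i, j). A $$ (i, if j < p then j + d else j - p))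
    = four_block_mat (mat p p (\<lambda>(i, j). reduced_entry x m (Suc i) (j + d)))
        (mat p d (\<lambda>(i, j). reduced_entry x m (Suc i) j))
        (0\<^sub>m d p) (mat d d (\<lambda>(i, j). if i = j then x ^ i else 0))"
    using m by (intro eq_matI) (auto simp: A_def reduced_entry_def)
  also have "det \<dots> = det (mat p p (\<lambda>(i, j). reduced_entry x m (Suc i) (j + d)))
      * det (mat d d (\<lambda>(i, j). if i = j then x ^ i else 0))"
    by (rule det_four_block_mat_lower_left_zero) auto
  also have "det (mat d d (\<lambda>(i, j). if i = j then x ^ i else 0)) = x ^ (d * (d - 1) div 2)"
    by (simp add: det_diagonal_mat lessThan_atLeast0 Sum_Ico_nat flip: power_sum)
  finally show ?thesis
    unfolding A_def by (simp add: mult.assoc)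
qed

lemma det_reduced_corner_even:
  assumes m: "m = Suc p"
  shows "det (mat p p (\<lambda>(i, j). reduced_entry x m (Suc i) (j + (2 * m * Suc g - p))))
    = (-1) ^ p * x ^ (\<Sum>i<p. Suc i + g * m)"
proof -
  have "mat p p (\<lambda>(i, j). reduced_entry x m (Suc i) (j + (2 * m * Suc g - p)))
      = mat p p (\<lambda>(i, j). if i = j then - (x ^ (Suc i + g * m)) else 0)"
  proof (rule eq_matI)
    fix i j
    assume "i < dim_row (mat p p (\<lambda>(i, j). if i = j then - (x ^ (Suc i + g * m)) else 0))"
      and "j < dim_col (mat p p (\<lambda>(i, j). if i = j then - (x ^ (Suc i + g * m)) else 0))"
    then have "i < p" and "j < p" by auto
    have k: "j + (2 * m * Suc g - p) = 2 * m * g + (m + 1 + j)"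
      using m by (simp add: algebra_simps)
    have "m + 1 + j < 2 * m" and "m > 0"
      using m \<open>j < p\<close> by simp_all
    then have "(j + (2 * m * Suc g - p)) mod (2 * m) = m + 1 + j" and "(j + (2 * m * Suc g - p)) div (2 * m) = g"
      unfolding k by (simp, subst div_mult_self4, simp_all)
    moreover have "Suc i < m"
      using m \<open>i < p\<close> by simp
    ultimately show "mat p p (\<lambda>(i, j). reduced_entry x m (Suc i) (j + (2 * m * Suc g - p))) $$ (i, j)
        = mat p p (\<lambda>(i, j). if i = j then - (x ^ (Suc i + g * m)) else 0) $$ (i, j)"
      using \<open>i < p\<close> \<open>j < p\<close> by (auto simp: reduced_entry_def clearing_entry_below_period power_add)
  qed auto
  then show ?thesis
    by (simp add: det_diagonal_mat prod_uminus power_sum)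
qed

lemma det_reduced_corner_odd:
  fixes x :: "'a :: idom"
  assumes m: "m = Suc p"
  shows "det (mat p p (\<lambda>(i, j). reduced_entry x m (Suc i) (j + (2 * m * h + m - p))))
    = (-1) ^ (p * (p - 1) div 2) * x ^ (h * m * p)"
proof -
  have "mat p p (\<lambda>(i, j). reduced_entry x m (Suc i) (j + (2 * m * h + m - p)))
      = mat p p (\<lambda>(i, j). if i + j + 1 = p then x ^ (h * m) else 0)"
  proof (rule eq_matI)
    fix i j
    assume "i < dim_row (mat p p (\<lambda>(i, j). if i + j + 1 = p then x ^ (h * m) else 0))"
      and "j < dim_col (mat p p (\<lambda>(i, j). if i + j + 1 = p then x ^ (h * m) else 0))"
    then have "i < p" and "j < p" by auto
    have k: "j + (2 * m * h + m - p) = 2 * m * h + (1 + j)"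
      using m by simp
    have "1 + j < 2 * m" and "m > 0"
      using m \<open>j < p\<close> by simp_all
    then have "(j + (2 * m * h + m - p)) mod (2 * m) = 1 + j" and "(j + (2 * m * h + m - p)) div (2 * m) = h"
      unfolding k by (simp, subst div_mult_self4, simp_all)
    moreover have "Suc i < m" and "j < m" and "i + j + 1 = p \<longleftrightarrow> m - Suc i = 1 + j"
      using m \<open>i < p\<close> \<open>j < p\<close> by auto
    ultimately show "mat p p (\<lambda>(i, j). reduced_entry x m (Suc i) (j + (2 * m * h + m - p))) $$ (i, j)
        = mat p p (\<lambda>(i, j). if i + j + 1 = p then x ^ (h * m) else 0) $$ (i, j)"
      using \<open>i < p\<close> \<open>j < p\<close> by (auto simp: reduced_entry_def clearing_entry_below_period)
  qed auto
  then show ?thesis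
    by (simp only: det_antidiagonal_mat power_mult)
qed

lemma det_reduced_mat_even:
  fixes x :: "'a :: idom"
  assumes m: "m = Suc p" and n: "n = 2 * Suc g"
  shows "det (mat (m * n) (m * n) (\<lambda>(i, k). reduced_entry x m (Suc i) k))
    = (-1) ^ (n * m * (m - 1) div 2) * x ^ (m\<^sup>2 * n * (n - 1) div 2)"
proof -
  define d where "d = m * n - p"
  have N: "m * n = p + d" and d: "d = 2 * p * g + p + 2 * g + 2"
    using m n by (simp_all add: d_def algebra_simps)
  have "d = 2 * m * Suc g - p"
    by (simp add: d_def n mult_ac)
  then have corner: "det (mat p p (\<lambda>(i, j). reduced_entry x m (Suc i) (j + d)))
      = (-1) ^ p * x ^ (\<Sum>i<p. Suc i + g * m)"
    by (simp only: det_reduced_corner_even[OF m])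
  have sum: "2 * (\<Sum>i<q. Suc i + c) = q * (q + 1) + 2 * q * c" for q c :: nat
    by (induction q) (simp_all add: algebra_simps)
  have "even (d * (d - 1))"
    by (cases "even d") auto
  then have "2 * ((\<Sum>i<p. Suc i + g * m) + d * (d - 1) div 2) = p * (p + 1) + 2 * p * (g * m) + d * (d - 1)"
    using sum[where q = p and c = "g * m"] by simp
  also have "\<dots> = m\<^sup>2 * n * (n - 1)"
    unfolding d m n by (simp add: algebra_simps power2_eq_square)
  also have "\<dots> = 2 * (m\<^sup>2 * n * (n - 1) div 2)"
    using n by simp
  finally have exponent: "(\<Sum>i<p. Suc i + g * m) + d * (d - 1) div 2 = m\<^sup>2 * n * (n - 1) div 2"
    by simp
  have "p * d + p = 2 * (p * p * g + p * g + p) + p * (p + 1)"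
    unfolding d by (simp add: algebra_simps)
  then have "even (p * d + p)"
    by simp
  moreover have "n * m * (m - 1) = 2 * (Suc g * (p * (p + 1)))"
    unfolding m n by (simp add: algebra_simps)
  then have "even (n * m * (m - 1) div 2)"
    by simp
  ultimately have sign: "(-1 :: 'a) ^ (p * d + p) = (-1) ^ (n * m * (m - 1) div 2)"
    by simp
  have "det (mat (m * n) (m * n) (\<lambda>(i, k). reduced_entry x m (Suc i) k))
      = (-1) ^ (p * d) * ((-1) ^ p * x ^ (\<Sum>i<p. Suc i + g * m)) * x ^ (d * (d - 1) div 2)"
    by (simp only: N det_reduced_mat_block[OF m] corner)
  also have "\<dots> = (-1) ^ (p * d + p) * x ^ ((\<Sum>i<p. Suc i + g * m) + d * (d - 1) div 2)"
    by (simp add: power_add mult_ac)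
  finally show ?thesis
    unfolding sign exponent .
qed

lemma det_reduced_mat_odd:
  fixes x :: "'a :: idom"
  assumes m: "m = Suc p" and n: "n = 2 * h + 1"
  shows "det (mat (m * n) (m * n) (\<lambda>(i, k). reduced_entry x m (Suc i) k))
    = (-1) ^ (n * m * (m - 1) div 2) * x ^ (m\<^sup>2 * n * (n - 1) div 2)"
proof -
  define d where "d = m * n - p"
  have N: "m * n = p + d" and d: "d = 2 * m * h + 1"
    using m n by (simp_all add: d_def algebra_simps)
  have "d = 2 * m * h + m - p"
    by (simp add: d_def n algebra_simps)
  then have corner: "det (mat p p (\<lambda>(i, j). reduced_entry x m (Suc i) (j + d)))
      = (-1) ^ (p * (p - 1) div 2) * x ^ (h * m * p)"
    by (simp only: det_reduced_corner_odd[OF m])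
  have "d * (d - 1) div 2 = (2 * m * h + 1) * (m * h)"
    unfolding d by simp
  moreover have "m\<^sup>2 * n * (n - 1) div 2 = m\<^sup>2 * n * h"
    unfolding n by (simp add: algebra_simps)
  ultimately have exponent: "h * m * p + d * (d - 1) div 2 = m\<^sup>2 * n * (n - 1) div 2"
    unfolding m n by (simp add: algebra_simps power2_eq_square)
  define T where "T = p * (p - 1) div 2"
  have "even (p * (p - 1))"
    by (cases "even p") auto
  then have T: "p * (p - 1) = 2 * T"
    unfolding T_def by simp
  then have "m * (m - 1) = 2 * (T + p)"
    unfolding m by (cases p) (simp_all add: algebra_simps)
  then have "n * m * (m - 1) = 2 * (n * (T + p))"
    by (metis mult.assoc mult.left_commute)
  then have "n * m * (m - 1) div 2 = 2 * (h * (T + p)) + (T + p)"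
    unfolding n by (simp add: algebra_simps)
  moreover have "p * d + p * (p - 1) div 2 = 2 * (p * m * h) + (T + p)"
    using T unfolding d by (simp add: algebra_simps)
  ultimately have sign: "(-1 :: 'a) ^ (p * d + p * (p - 1) div 2) = (-1) ^ (n * m * (m - 1) div 2)"
    by (simp add: minus_one_power_iff)
  have "det (mat (m * n) (m * n) (\<lambda>(i, k). reduced_entry x m (Suc i) k))
      = (-1) ^ (p * d) * ((-1) ^ (p * (p - 1) div 2) * x ^ (h * m * p)) * x ^ (d * (d - 1) div 2)"
    by (simp only: N det_reduced_mat_block[OF m] corner)
  also have "\<dots> = (-1) ^ (p * d + p * (p - 1) div 2) * x ^ (h * m * p + d * (d - 1) div 2)"
    by (simp add: power_add mult_ac)
  finally show ?thesis
    unfolding sign exponent .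
qed

lemma det_moment_mat:
  fixes x :: "'a :: idom"
  assumes "m \<ge> 1"
  shows "det (mat N N (\<lambda>(i, j). moment_entry x m (Suc i) j)) =
    (if m dvd N then (let n = N div m in (-1) ^ (n * m * (m - 1) div 2) * x ^ (m\<^sup>2 * n * (n - 1) div 2))
     else 0)"
proof (cases "m dvd N")
  case False
  then show ?thesis
    using det_moment_mat_eq_reduced[OF assms, of N x] det_reduced_mat_not_dvd[OF assms False, of x] by simp
next
  case True
  then obtain n where N: "N = m * n"
    by blast
  obtain p where m: "m = Suc p"
    using assms by (cases m) auto
  have "det (mat (m * n) (m * n) (\<lambda>(i, k). reduced_entry x m (Suc i) k))
      = (-1) ^ (n * m * (m - 1) div 2) * x ^ (m\<^sup>2 * n * (n - 1) div 2)"
  proof (cases "even n")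
    case True
    then obtain h where n: "n = 2 * h"
      by blast
    show ?thesis
    proof (cases h)
      case 0
      then show ?thesis by (simp add: n)
    next
      case (Suc g)
      then show ?thesis using det_reduced_mat_even[OF m] n by simp
    qed
  next
    case False
    then obtain h where "n = 2 * h + 1"
      using oddE by blast
    then show ?thesis by (rule det_reduced_mat_odd[OF m])
  qed
  then show ?thesis
    using det_moment_mat_eq_reduced[OF assms, of N x] True assms by (simp add: N Let_def)
qed

section \<open>The moment functional\<close>

definition eval_X_inv :: "rat poly \<Rightarrow> rat fls" where
  "eval_X_inv p = poly (map_poly fls_const p) fls_X_inv"

lemma fls_const_sum: "fls_const (\<Sum>a\<in>A. f a) = (\<Sum>a\<in>A. fls_const (f a))"
  by (induction A rule: infinite_finite_induct) (simp_all flip: fls_plus_const)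

interpretation eval_X_inv: comm_ring_hom eval_X_inv
proof unfold_locales
  fix p q :: "rat poly"
  have "map_poly fls_const (p * q) = map_poly fls_const p * map_poly fls_const q"
    by (rule poly_eqI) (simp add: coeff_map_poly coeff_mult fls_const_sum)
  then show "eval_X_inv (p * q) = eval_X_inv p * eval_X_inv q"
    by (simp add: eval_X_inv_def)
  have "map_poly fls_const (p + q) = map_poly fls_const p + map_poly fls_const q"
    by (rule poly_eqI) (simp add: coeff_map_poly flip: fls_plus_const)
  then show "eval_X_inv (p + q) = eval_X_inv p + eval_X_inv q"
    by (simp add: eval_X_inv_def)
qed (simp_all add: eval_X_inv_def)

lemma eval_X_inv_const [simp]: "eval_X_inv [:a:] = fls_const a"
  by (simp add: eval_X_inv_def map_poly_pCons)

lemma eval_X_inv_shifted_X: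
  "eval_X_inv [:- (1 + x), 1:] = inverse (narayana_fls x) + fls_const x * narayana_fls x"
proof -
  have "eval_X_inv [:- (1 + x), 1:] = fls_X_inv - fls_const (1 + x)"
    by (simp add: eval_X_inv_def map_poly_pCons flip: fls_const_uminus)
  then show ?thesis
    by (subst (asm) fls_X_inv_eq_narayana_sum[of x]) simp
qed

lemma eval_X_inv_eq_sum:
  assumes "degree p < N"
  shows "eval_X_inv p = (\<Sum>a<N. fls_const (coeff p a) * fls_X_inv ^ a)"
proof -
  have "eval_X_inv p = (\<Sum>a\<le>degree p. fls_const (coeff p a) * fls_X_inv ^ a)"
    by (simp add: eval_X_inv_def poly_altdef degree_map_poly coeff_map_poly)
  also have "\<dots> = (\<Sum>a<N. fls_const (coeff p a) * fls_X_inv ^ a)"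
    using assms by (intro sum.mono_neutral_left) (auto simp: coeff_eq_0)
  finally show ?thesis .
qed

definition narayana_functional :: "rat \<Rightarrow> nat \<Rightarrow> rat fls \<Rightarrow> rat" where
  "narayana_functional x m f = fls_residue (f * fls_X_inv ^ 2 * narayana_fls x ^ m)"

lemma narayana_functional_sum:
  "narayana_functional x m (\<Sum>a\<in>A. f a) = (\<Sum>a\<in>A. narayana_functional x m (f a))"
  by (simp add: narayana_functional_def sum_distrib_right fls_nth_sum)

lemma narayana_functional_const_mult:
  "narayana_functional x m (fls_const c * f) = c * narayana_functional x m f"
  by (simp add: narayana_functional_def mult.assoc)

lemma narayana_functional_X_inv_power:
  "narayana_functional x m (fls_X_inv ^ k) = (narayana_series x ^ m) $ (k + 1)"
proof -
  have "fls_X_inv ^ k * fls_X_inv ^ 2 * narayana_fls x ^ m = fls_shift (int (k + 2)) (narayana_fls x ^ m)"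
    by (simp only: fls_X_inv_power_times_conv_shift(1) flip: power_add)
  then have "narayana_functional x m (fls_X_inv ^ k) = fls_nth (narayana_fls x ^ m) (int (k + 1))"
    by (simp add: narayana_functional_def)
  also have "\<dots> = (narayana_series x ^ m) $ (k + 1)"
    by (simp add: narayana_fls_def nat_add_distrib flip: fps_to_fls_power)
  finally show ?thesis .
qed

lemma narayana_functional_eval_X_inv_mult:
  assumes "degree p < N" and "degree q < N"
  shows "narayana_functional x m (eval_X_inv p * eval_X_inv q)
    = (\<Sum>a<N. \<Sum>b<N. coeff p a * narayana_functional x m (fls_X_inv ^ (a + b)) * coeff q b)"
proof -
  have product: "eval_X_inv p * eval_X_inv q
      = (\<Sum>a<N. \<Sum>b<N. fls_const (coeff p a * coeff q b) * fls_X_inv ^ (a + b))"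
    unfolding eval_X_inv_eq_sum[OF assms(1)] eval_X_inv_eq_sum[OF assms(2)] sum_product
    by (intro sum.cong refl) (simp add: power_add mult_ac)
  show ?thesis
    unfolding product narayana_functional_sum narayana_functional_const_mult by (simp add: mult_ac)
qed

lemma fls_X_inv_square_eq_narayana:
  "fls_X_inv ^ 2 = inverse (narayana_fls x) * (inverse (narayana_fls x) - fls_const x * narayana_fls x)
     * fls_deriv (narayana_fls x)"
proof -
  define U where "U = narayana_fls x"
  have "fls_deriv fls_X_inv = fls_deriv (inverse U + fls_const (1 + x) + fls_const x * U)"
    unfolding U_def by (subst fls_X_inv_eq_narayana_sum[of x]) (rule refl)
  then have "- (fls_X_inv ^ 2) = - (inverse U * inverse U * fls_deriv U) + fls_const x * fls_deriv U"
    by (simp add: fls_inverse_deriv_divring fls_deriv_mult_const_left power2_eq_square)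
  then show ?thesis
    unfolding U_def[symmetric] using narayana_fls_nonzero[of x]
    by (simp add: algebra_simps U_def)
qed

lemma fls_residue_eq_moment_entry:
  fixes U :: "'a :: field_char_0 fls"
  assumes U: "fls_subdegree U = 1" and a: "a \<ge> 1"
  shows "fls_residue ((inverse U ^ a - fls_const x ^ a * U ^ a)
      * (if k = 0 then 1 else inverse U ^ k + fls_const x ^ k * U ^ k) * inverse U * U ^ m * fls_deriv U)
    = moment_entry x m a k"
proof -
  define w where "w = inverse U"
  define c where "c = fls_const x"
  have res: "fls_residue (w ^ p * U ^ q * fls_deriv U) = (if q + 1 = p then 1 else 0)" for p q
    unfolding w_def by (rule fls_residue_inverse_power_power_deriv[OF U])
  have add: "fls_residue (f + fls_const b * g) = fls_residue f + b * fls_residue g"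
    and diff: "fls_residue (f - fls_const b * g) = fls_residue f - b * fls_residue g"
    for f g :: "'a fls" and b
    by simp_all
  have "fls_residue ((w ^ a - c ^ a * U ^ a) * (if k = 0 then 1 else w ^ k + c ^ k * U ^ k)
      * w * U ^ m * fls_deriv U) = moment_entry x m a k" (is "fls_residue ?F = _")
  proof (cases "k = 0")
    case True
    then have "?F = w ^ (a + 1) * U ^ m * fls_deriv U - fls_const (x ^ a) * (w ^ 1 * U ^ (a + m) * fls_deriv U)"
      by (simp add: c_def algebra_simps power_add fls_const_power)
    then have "fls_residue ?F = (if m + 1 = a + 1 then 1 else 0) - x ^ a * (if a + m + 1 = 1 then 1 else 0)"
      by (simp only: diff res)
    then show ?thesis
      using True a by (simp add: moment_entry_def)
  next
    case False
    then have "?F = w ^ (a + k + 1) * U ^ m * fls_deriv U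
          + fls_const (x ^ k) * (w ^ (a + 1) * U ^ (k + m) * fls_deriv U)
          - fls_const (x ^ a) * (w ^ (k + 1) * U ^ (a + m) * fls_deriv U)
          - fls_const (x ^ (a + k)) * (w ^ 1 * U ^ (a + k + m) * fls_deriv U)"
      by (simp add: c_def algebra_simps power_add fls_const_power flip: fls_const_mult_const)
    then have "fls_residue ?F = (if m + 1 = a + k + 1 then 1 else 0) + x ^ k * (if k + m + 1 = a + 1 then 1 else 0)
        - x ^ a * (if a + m + 1 = k + 1 then 1 else 0) - x ^ (a + k) * (if a + k + m + 1 = 1 then 1 else 0)"
      by (simp only: diff add res)
    then show ?thesis
      using False a by (simp add: moment_entry_def)
  qed
  then show ?thesis
    unfolding w_def c_def .
qed

lemma narayana_functional_dickson:
  "narayana_functional x m (eval_X_inv (dickson 1 [:x:] [:- (1 + x), 1:] i)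
      * eval_X_inv (if k = 0 then 1 else dickson 2 [:x:] [:- (1 + x), 1:] k))
   = moment_entry x m (Suc i) k"
proof -
  define U where "U = narayana_fls x"
  define w where "w = inverse U"
  define c where "c = fls_const x"
  have uw: "U * w = 1"
    unfolding w_def U_def using narayana_fls_nonzero by simp
  have y: "eval_X_inv [:- (1 + x), 1:] = w + c * U"
    unfolding w_def c_def U_def by (rule eval_X_inv_shifted_X)
  have E: "(w - c * U) * eval_X_inv (dickson 1 [:x:] [:- (1 + x), 1:] i) = w ^ Suc i - c ^ Suc i * U ^ Suc i"
    unfolding eval_X_inv.hom_dickson y
    using dickson_second_kind_parametrization[OF uw, of c i] by (simp add: c_def)
  have "eval_X_inv (dickson 2 [:x:] [:- (1 + x), 1:] k) = w ^ k + c ^ k * U ^ k"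
    unfolding eval_X_inv.hom_dickson y
    using dickson_first_kind_parametrization[OF uw, of c k] by (simp add: c_def eval_X_inv.hom_numeral)
  then have D: "eval_X_inv (if k = 0 then 1 else dickson 2 [:x:] [:- (1 + x), 1:] k)
      = (if k = 0 then 1 else w ^ k + c ^ k * U ^ k)"
    by simp
  have "narayana_functional x m (eval_X_inv (dickson 1 [:x:] [:- (1 + x), 1:] i)
      * eval_X_inv (if k = 0 then 1 else dickson 2 [:x:] [:- (1 + x), 1:] k))
    = fls_residue ((w ^ Suc i - c ^ Suc i * U ^ Suc i) * (if k = 0 then 1 else w ^ k + c ^ k * U ^ k)
        * w * U ^ m * fls_deriv U)"
    unfolding narayana_functional_def fls_X_inv_square_eq_narayana[of x] E[symmetric] D
      U_def[symmetric] w_def[symmetric] c_def[symmetric]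
    by (simp only: mult_ac)
  also have "\<dots> = moment_entry x m (Suc i) k"
    unfolding w_def c_def U_def
    by (rule fls_residue_eq_moment_entry[OF fls_subdegree_narayana_fls]) simp
  finally show ?thesis .
qed

lemma poly_hankel:
  "poly (hankel m N) x = det (mat N N (\<lambda>(i, j). narayana_functional x m (fls_X_inv ^ (i + j))))"
proof -
  interpret eval: comm_ring_hom "\<lambda>p. poly p x"
    by unfold_locales (simp_all add: poly_mult)
  have "poly (hankel m N) x
      = det (map_mat (\<lambda>p. poly p x) (mat N N (\<lambda>(i, j). gamma2m m (int i + int j + 1 - int m))))"
    unfolding hankel_def by (rule eval.hom_det[symmetric])
  also have "map_mat (\<lambda>p. poly p x) (mat N N (\<lambda>(i, j). gamma2m m (int i + int j + 1 - int m)))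
      = mat N N (\<lambda>(i, j). narayana_functional x m (fls_X_inv ^ (i + j)))"
    by (rule eq_matI) (auto simp: poly_gamma2m narayana_functional_X_inv_power)
  finally show ?thesis .
qed

lemma poly_hankel_eq_det_moment_mat:
  "poly (hankel m N) x = det (mat N N (\<lambda>(i, j). moment_entry x m (Suc i) j))"
proof -
  define P where "P i = dickson 1 [:x:] [:- (1 + x), 1:] i" for i
  define Q where "Q j = (if j = 0 then 1 else dickson 2 [:x:] [:- (1 + x), 1:] j)" for j
  have P: "degree (P i) \<le> i \<and> coeff (P i) i = 1" for i
    using degree_dickson_monic_linear[of 1 x "- (1 + x)" i] coeff_dickson_monic_linear[of 1 x "- (1 + x)" i]
    by (simp add: P_def)
  have Q: "degree (Q j) \<le> j \<and> coeff (Q j) j = 1" for j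
    using degree_dickson_monic_linear[of 2 x "- (1 + x)" j] coeff_dickson_monic_linear[of 2 x "- (1 + x)" j]
    by (simp add: Q_def)
  have "poly (hankel m N) x = det (mat N N (\<lambda>(i, j). narayana_functional x m (fls_X_inv ^ (i + j))))"
    by (rule poly_hankel)
  also have "\<dots> = det (mat N N (\<lambda>(i, j). \<Sum>a<N. \<Sum>b<N.
      coeff (P i) a * narayana_functional x m (fls_X_inv ^ (a + b)) * coeff (Q j) b))"
    using P Q by (intro det_hankel_unitriangular_change[symmetric])
  also have "\<dots> = det (mat N N (\<lambda>(i, j). narayana_functional x m (eval_X_inv (P i) * eval_X_inv (Q j))))"
  proof -
    have "narayana_functional x m (eval_X_inv (P i) * eval_X_inv (Q j))
        = (\<Sum>a<N. \<Sum>b<N. coeff (P i) a * narayana_functional x m (fls_X_inv ^ (a + b)) * coeff (Q j) b)"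
      if "i < N" and "j < N" for i j
      using P[of i] Q[of j] that by (intro narayana_functional_eval_X_inv_mult) auto
    then show ?thesis
      by (intro arg_cong[where f = det] eq_matI) auto
  qed
  also have "\<dots> = det (mat N N (\<lambda>(i, j). moment_entry x m (Suc i) j))"
    by (simp only: P_def Q_def narayana_functional_dickson)
  finally show ?thesis .
qed

theorem theorem1p5:
  fixes m N :: nat
  assumes "m \<ge> 1"
  shows "hankel m N =
    (if m dvd N then
       (let n = N div m in
          (-1) ^ (n * m * (m - 1) div 2) * monom 1 (m\<^sup>2 * n * (n - 1) div 2))
     else 0)"
proof (rule poly_ext)
  fix x :: rat
  show "poly (hankel m N) x = poly (if m dvd N then
       (let n = N div m in
          (-1) ^ (n * m * (m - 1) div 2) * monom 1 (m\<^sup>2 * n * (n - 1) div 2))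
     else 0) x"
    unfolding poly_hankel_eq_det_moment_mat det_moment_mat[OF assms]
    by (simp add: Let_def poly_monom)
qed

end
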